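(* Let $G$ be an abelian group, let $n\geq 0$, let $X\subseteq G$ be a finite, nonempty subset, let $S\in \mathcal F(G)$ be a sequence, and let $\mathscr A=A_1\cdot\ldots\cdot A_n$ be a setpartition with $\mathsf S(\mathscr A)\mid S$, $\mathrm{supp}(\mathsf S(\mathscr A)^{[-1]}\cdot S)\subseteq Z$, and $|A_i\setminus Z|\leq 1$ for all $i$, where $H\leq \mathsf H(X+\sum_{i=1}^{n}A_i)$ is a subgroup and $Z\subseteq G$ satisfies $Z=Z+H\subseteq \bigcap_{i=1}^n(A_i+H)$. Then: 1. $X+\Sigma_{n}(S)=X+\sum_{i=1}^{n}A_i$. 2. If $Z=g+H$ for some $g\in G$, then $X+\Sigma_{\ell}(S)=X+\sum_{i=1}^{n}A_i+(\ell-n)g$ for every $\ell\in [n,\,n+|\mathsf S(\mathscr A)^{[-1]}\cdot S|]$.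
   Context: A sequence over $G$ is a finite unordered list of elements of $G$ (element of the free abelian monoid $\mathcal F(G)$); $|S|$ is its length, $T\mid S$ means subsequence, $T^{[-1]}\cdot S$ is $S$ with the terms of $T$ removed, $\mathrm{supp}(S)$ is the set of elements occurring in $S$, $\sigma(T)$ is the sum of terms of $T$, and $\Sigma_\ell(S)=\{\sigma(T):T\mid S,\ |T|=\ell\}$. A setpartition is a sequence $\mathscr A=A_1\cdot\ldots\cdot A_n$ of finite nonempty subsets of $G$; $\mathsf S(\mathscr A)$ is the sequence of all elements of all $A_i$ (counted once per set containing it). $\mathsf H(A)=\{g:g+A=A\}$. Sumsets $A_1+\dots+A_n=\{a_1+\dots+a_n:a_i\in A_i\}$ (an empty sumset is $\{0\}$). *)

theory Defs
  imports Main "HOL-Library.Multiset"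
begin

definition setplus :: "'a::ab_group_add set \<Rightarrow> 'a set \<Rightarrow> 'a set" where
  "setplus A B = {a + b | a b. a \<in> A \<and> b \<in> B}"

definition sumset :: "'a::ab_group_add set list \<Rightarrow> 'a set" where
  "sumset As = foldr setplus As {0}"

definition seq_of_setpartition :: "'a set list \<Rightarrow> 'a multiset" where
  "seq_of_setpartition As = (\<Sum>A\<leftarrow>As. mset_set A)"

definition is_setpartition :: "'a set list \<Rightarrow> bool" where
  "is_setpartition As \<longleftrightarrow> (\<forall>A\<in>set As. finite A \<and> A \<noteq> {})"

definition Sigma_len :: "nat \<Rightarrow> 'a::ab_group_add multiset \<Rightarrow> 'a set" where
  "Sigma_len l S = {sum_mset T | T. T \<subseteq># S \<and> size T = l}"

definition stab :: "'a::ab_group_add set \<Rightarrow> 'a set" where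
  "stab A = {g. (\<lambda>a. g + a) ` A = A}"

definition is_subgroup :: "'a::ab_group_add set \<Rightarrow> bool" where
  "is_subgroup H \<longleftrightarrow> 0 \<in> H \<and> (\<forall>x\<in>H. \<forall>y\<in>H. x + y \<in> H) \<and> (\<forall>x\<in>H. - x \<in> H)"

definition nmul :: "nat \<Rightarrow> 'a::ab_group_add \<Rightarrow> 'a" where
  "nmul k g = (\<Sum>_<k. g)"

end

theory Submission
  imports Defs "HOL-Library.Set_Algebras"
begin

(* Let T be a subsequence of S with
   |T| = l >= n.  A term of T outside Z lies in S(A); since |A_i - Z| <= 1, each such term can
   be put in the slot of one A_i that contains it.  Every remaining slot takes a term of T lying
   in Z, and such a term lies in A_i + H.  So the n chosen terms add up to an element of
   A_1 + ... + A_n + H.  The other l - n terms all lie in Z; when Z = g + H their sum is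
   (l - n) g modulo H.  Adding X removes the ambiguity modulo H, because H stabilises
   X + A_1 + ... + A_n.  For the reverse inclusions, take one element from each A_i and add
   l - n further terms of S - S(A). *)

lemma setplus_eq_plus: "setplus A B = A + B"
  by (auto simp: setplus_def set_plus_def)

lemma sumset_Nil [simp]: "sumset [] = {0}"
  by (simp add: sumset_def)

lemma sumset_Cons [simp]: "sumset (A # As) = A + sumset As"
  by (simp add: sumset_def setplus_eq_plus)

lemma seq_of_setpartition_Nil [simp]: "seq_of_setpartition [] = {#}"
  by (simp add: seq_of_setpartition_def)

lemma seq_of_setpartition_Cons [simp]:
  "seq_of_setpartition (A # As) = mset_set A + seq_of_setpartition As"
  by (simp add: seq_of_setpartition_def)

lemma nmul_Suc: "nmul (Suc k) g = g + nmul k g"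
  by (simp add: nmul_def)

lemma image_plus_eq_singleton_plus: "(\<lambda>h. g + h) ` H = {g} + H"
  by (auto simp: set_plus_def)

lemma singleton_plus_singleton: "{a} + {b} = {a + b}"
  by (simp add: set_plus_def)

lemma subgroup_plus_self: "is_subgroup H \<Longrightarrow> H + H = H"
  unfolding is_subgroup_def set_plus_def by force

lemma subgroup_singleton_plus_sym:
  assumes "is_subgroup H" and "a \<in> {b} + H"
  shows "b \<in> {a} + H"
proof -
  obtain h where "h \<in> H" "a = b + h"
    using assms(2) by (auto simp: set_plus_def)
  then have "- h \<in> H" "b = a + - h"
    using assms(1) by (auto simp: is_subgroup_def)
  then show ?thesis by (auto simp: set_plus_def)
qed

lemma plus_stab_eq:
  assumes "0 \<in> H" and "H \<subseteq> stab Y"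
  shows "Y + H = Y"
proof
  show "Y + H \<subseteq> Y"
  proof
    fix x assume "x \<in> Y + H"
    then obtain y h where "x = y + h" "y \<in> Y" "h \<in> H" by (rule set_plus_elim)
    moreover have "(\<lambda>a. h + a) ` Y = Y"
      using \<open>h \<in> H\<close> assms(2) by (auto simp: stab_def)
    ultimately show "x \<in> Y" by (metis add.commute imageI)
  qed
  show "Y \<subseteq> Y + H"
    using assms(1) set_plus_intro[of _ Y 0 H] by auto
qed

lemma sum_mset_in_coset:
  assumes "is_subgroup H" and "set_mset M \<subseteq> {g} + H"
  shows "sum_mset M \<in> {nmul (size M) g} + H"
  using assms(2)
proof (induction M)
  case empty
  then show ?case using assms(1) by (auto simp: nmul_def is_subgroup_def set_plus_def)
next
  case (add x M)
  then have "x + sum_mset M \<in> ({g} + H) + ({nmul (size M) g} + H)" by auto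
  also have "\<dots> = ({g} + {nmul (size M) g}) + (H + H)"
    by (simp only: add.assoc add.left_commute)
  also have "\<dots> = {nmul (size (add_mset x M)) g} + H"
    by (simp add: singleton_plus_singleton subgroup_plus_self[OF assms(1)] nmul_Suc)
  finally show ?case by simp
qed

lemma exists_subset_mset_size:
  "k \<le> size M \<Longrightarrow> \<exists>N. N \<subseteq># M \<and> size N = k"
proof (induction M arbitrary: k)
  case (add x M)
  show ?case
  proof (cases k)
    case (Suc k')
    with add obtain N where "N \<subseteq># M" "size N = k'" by auto
    with Suc show ?thesis by (intro exI[of _ "add_mset x N"]) auto
  qed auto
qed auto

lemma subset_mset_plus_disjointD:
  assumes "T \<subseteq># M + N" and "set_mset T \<inter> set_mset N = {}"
  shows "T \<subseteq># M"
proof (rule mset_subset_eqI)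
  fix x
  show "count T x \<le> count M x"
  proof (cases "x \<in># T")
    case True
    then have "count N x = 0" using assms(2) by (auto simp: not_in_iff)
    then show ?thesis using assms(1) by (metis add.right_neutral count_union mset_subset_eq_count)
  qed (simp add: not_in_iff)
qed

lemma Sigma_len_mono: "M \<subseteq># N \<Longrightarrow> Sigma_len k M \<subseteq> Sigma_len k N"
  unfolding Sigma_len_def using subset_mset.order_trans by blast

lemma Sigma_len_0 [simp]: "Sigma_len 0 M = {0}"
  unfolding Sigma_len_def by auto

lemma Sigma_len_plus: "Sigma_len k M + Sigma_len m N \<subseteq> Sigma_len (k + m) (M + N)"
proof
  fix x assume "x \<in> Sigma_len k M + Sigma_len m N"
  then obtain s t where "x = s + t" "s \<in> Sigma_len k M" "t \<in> Sigma_len m N"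
    by (rule set_plus_elim)
  then obtain T U where T: "T \<subseteq># M" "size T = k" "s = sum_mset T"
    and U: "U \<subseteq># N" "size U = m" "t = sum_mset U"
    unfolding Sigma_len_def by blast
  have "T + U \<subseteq># M + N" using T(1) U(1) by (rule subset_mset.add_mono)
  moreover have "size (T + U) = k + m" "x = sum_mset (T + U)"
    using T U \<open>x = s + t\<close> by simp_all
  ultimately show "x \<in> Sigma_len (k + m) (M + N)"
    unfolding Sigma_len_def by blast
qed

lemma sumset_subset_Sigma_len:
  "is_setpartition As \<Longrightarrow> sumset As \<subseteq> Sigma_len (length As) (seq_of_setpartition As)"
proof (induction As)
  case Nil
  then show ?case by simp
next
  case (Cons A As)
  then have "finite A" "is_setpartition As" by (auto simp: is_setpartition_def)
  have "A \<subseteq> Sigma_len 1 (mset_set A)"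
  proof
    fix a assume "a \<in> A"
    then have "{#a#} \<subseteq># mset_set A" "size {#a#} = 1" "a = sum_mset {#a#}"
      using \<open>finite A\<close> by simp_all
    then show "a \<in> Sigma_len 1 (mset_set A)"
      unfolding Sigma_len_def by blast
  qed
  then have "sumset (A # As)
      \<subseteq> Sigma_len 1 (mset_set A) + Sigma_len (length As) (seq_of_setpartition As)"
    unfolding sumset_Cons using Cons.IH[OF \<open>is_setpartition As\<close>]
    by (rule set_plus_mono2)
  also have "\<dots> \<subseteq> Sigma_len (length (A # As)) (seq_of_setpartition (A # As))"
    using Sigma_len_plus[of 1 "mset_set A"] by simp
  finally show ?case .
qed

lemma coset_plus_coset:
  assumes "is_subgroup H" and "a \<in> A + H" and "b \<in> B + H"
  shows "a + b \<in> (A + B) + H"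
proof -
  have "a + b \<in> (A + H) + (B + H)" using assms(2,3) by (rule set_plus_intro)
  also have "\<dots> = (A + B) + (H + H)" by (simp only: add.assoc add.left_commute)
  finally show ?thesis by (simp only: subgroup_plus_self[OF assms(1)])
qed

lemma shift_term_into_coset_part:
  assumes "is_subgroup H" and "Z \<subseteq> A + H"
    and "T = T1 + T2" and "set_mset T2 \<subseteq> Z" and "T2 \<noteq> {#}" and "sum_mset T1 \<in> B + H"
  obtains z where "T = add_mset z T1 + (T2 - {#z#})" and "set_mset (T2 - {#z#}) \<subseteq> Z"
    and "sum_mset (add_mset z T1) \<in> (A + B) + H"
proof -
  obtain z where z: "z \<in># T2" using assms(5) by blast
  then have "z + sum_mset T1 \<in> (A + B) + H"
    using assms(2,4) coset_plus_coset[OF assms(1) _ assms(6)] by auto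
  moreover have "T = add_mset z T1 + (T2 - {#z#})" using assms(3) z by simp
  moreover have "set_mset (T2 - {#z#}) \<subseteq> Z" using assms(4) by (auto dest: in_diffD)
  ultimately show thesis using that by simp
qed

lemma subset_mset_set_plus_cases:
  assumes "finite A" and "card (A - Z) \<le> 1" and "T \<subseteq># mset_set A + M"
  obtains "T \<subseteq># M + mset_set (A \<inter> Z)"
    | t where "t \<in> A" "t \<in># T" "T - {#t#} \<subseteq># M + mset_set (A \<inter> Z)"
proof (cases "\<exists>t\<in>#T. t \<in> A - Z")
  case True
  then obtain t where t: "t \<in># T" "t \<in> A - Z" by blast
  with assms(1,2) have "(A \<inter> Z) \<union> {t} = A" by (auto simp: card_le_Suc0_iff_eq)
  moreover have "mset_set ((A \<inter> Z) \<union> {t}) = mset_set (A \<inter> Z) + {#t#}"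
    using assms(1) t(2) by (subst mset_set_Union) auto
  ultimately have "mset_set A = mset_set (A \<inter> Z) + {#t#}" by simp
  then have "T - {#t#} \<subseteq># M + mset_set (A \<inter> Z)"
    using assms(3) by (simp add: subset_eq_diff_conv ac_simps)
  with t show thesis by (intro that(2)) auto
next
  case False
  have "mset_set ((A \<inter> Z) \<union> (A - Z)) = mset_set (A \<inter> Z) + mset_set (A - Z)"
    using assms(1) by (intro mset_set_Union) auto
  then have "mset_set A = mset_set (A \<inter> Z) + mset_set (A - Z)"
    by (simp only: Int_Diff_Un)
  then have "T \<subseteq># (M + mset_set (A \<inter> Z)) + mset_set (A - Z)"
    using assms(3) by (simp add: ac_simps)
  moreover have "set_mset T \<inter> set_mset (mset_set (A - Z)) = {}"
    using False assms(1) by auto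
  ultimately show thesis by (blast intro: that(1) subset_mset_plus_disjointD)
qed

lemma split_subsequence:
  assumes "is_setpartition As" and "is_subgroup H"
    and "\<forall>A\<in>set As. card (A - Z) \<le> 1" and "\<forall>A\<in>set As. Z \<subseteq> A + H"
    and "T \<subseteq># seq_of_setpartition As + R" and "set_mset R \<subseteq> Z"
    and "length As \<le> size T"
  shows "\<exists>T1 T2. T = T1 + T2 \<and> size T1 = length As \<and> set_mset T2 \<subseteq> Z
    \<and> sum_mset T1 \<in> sumset As + H"
  using assms(1,3-)
proof (induction As arbitrary: T R)
  case Nil
  then have "set_mset T \<subseteq> Z" by (auto dest: mset_subset_eqD)
  moreover have "0 \<in> sumset [] + H"
    using assms(2) set_plus_intro[of 0 "{0}" 0 H] by (simp add: is_subgroup_def)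
  ultimately show ?case by (intro exI[of _ "{#}"] exI[of _ T]) simp
next
  case (Cons A As)
  from Cons.prems have A: "finite A" "card (A - Z) \<le> 1" "Z \<subseteq> A + H"
    and As: "is_setpartition As" "\<forall>A\<in>set As. card (A - Z) \<le> 1" "\<forall>A\<in>set As. Z \<subseteq> A + H"
    by (auto simp: is_setpartition_def)
  let ?R = "R + mset_set (A \<inter> Z)"
  have R: "set_mset ?R \<subseteq> Z" using Cons.prems(5) A(1) by auto
  have "T \<subseteq># mset_set A + (seq_of_setpartition As + R)"
    using Cons.prems(4) by (simp add: add.assoc)
  then consider (inside) "T \<subseteq># (seq_of_setpartition As + R) + mset_set (A \<inter> Z)"
    | (outside) t where "t \<in> A" "t \<in># T"
      "T - {#t#} \<subseteq># (seq_of_setpartition As + R) + mset_set (A \<inter> Z)"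
    by (rule subset_mset_set_plus_cases[OF A(1,2)])
  then show ?case
  proof cases
    case inside
    then have "T \<subseteq># seq_of_setpartition As + ?R" by (simp add: add.assoc)
    from Cons.IH[OF As this R] Cons.prems(6) obtain T1 T2 where
      T: "T = T1 + T2" "size T1 = length As" "set_mset T2 \<subseteq> Z" "sum_mset T1 \<in> sumset As + H"
      by auto
    moreover have "T2 \<noteq> {#}" using T(1,2) Cons.prems(6) by auto
    ultimately obtain z where "T = add_mset z T1 + (T2 - {#z#})"
      "set_mset (T2 - {#z#}) \<subseteq> Z" "sum_mset (add_mset z T1) \<in> (A + sumset As) + H"
      using shift_term_into_coset_part[OF assms(2) A(3)] by metis
    with T(2) show ?thesis by (intro exI[of _ "add_mset z T1"] exI[of _ "T2 - {#z#}"]) simp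
  next
    case (outside t)
    then have "T - {#t#} \<subseteq># seq_of_setpartition As + ?R" by (simp add: add.assoc)
    moreover have "length As \<le> size (T - {#t#})"
      using Cons.prems(6) outside(2) by (simp add: size_Diff_singleton)
    ultimately obtain T1 T2 where
      T: "T - {#t#} = T1 + T2" "size T1 = length As" "set_mset T2 \<subseteq> Z"
        "sum_mset T1 \<in> sumset As + H"
      using Cons.IH[OF As _ R] by blast
    have "t \<in> A + H"
      using outside(1) assms(2) set_plus_intro[of t A 0 H] by (simp add: is_subgroup_def)
    then have "t + sum_mset T1 \<in> sumset (A # As) + H"
      using coset_plus_coset[OF assms(2) _ T(4)] by simp
    moreover have "T = add_mset t T1 + T2" using T(1) outside(2) by (metis add_mset_add_single
      insert_DiffM union_mset_add_mset_left)
    ultimately show ?thesis using T(2,3)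
      by (intro exI[of _ "add_mset t T1"] exI[of _ T2]) simp
  qed
qed

locale setpartition_of_sequence =
  fixes As :: "'a::ab_group_add set list" and S :: "'a multiset" and Z H :: "'a set"
  assumes setpartition: "is_setpartition As"
    and seq_subset: "seq_of_setpartition As \<subseteq># S"
    and rest_subset: "set_mset (S - seq_of_setpartition As) \<subseteq> Z"
    and card_outside: "\<forall>A\<in>set As. card (A - Z) \<le> 1"
    and subgroup: "is_subgroup H"
    and covered: "\<forall>A\<in>set As. Z \<subseteq> A + H"
begin

lemma split_subsequence_of_S:
  assumes "T \<subseteq># S" and "length As \<le> size T"
  shows "\<exists>T1 T2. T = T1 + T2 \<and> size T1 = length As \<and> set_mset T2 \<subseteq> Z
    \<and> sum_mset T1 \<in> sumset As + H"
proof (rule split_subsequence[OF setpartition subgroup card_outside covered _ rest_subset assms(2)])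
  show "T \<subseteq># seq_of_setpartition As + (S - seq_of_setpartition As)"
    using assms(1) seq_subset by simp
qed

lemma sumset_subset_Sigma_len_length: "sumset As \<subseteq> Sigma_len (length As) S"
  using sumset_subset_Sigma_len[OF setpartition] Sigma_len_mono[OF seq_subset] by blast

lemma Sigma_len_length_subset: "Sigma_len (length As) S \<subseteq> sumset As + H"
proof
  fix x assume "x \<in> Sigma_len (length As) S"
  then obtain T where "T \<subseteq># S" "size T = length As" "x = sum_mset T"
    unfolding Sigma_len_def by blast
  with split_subsequence_of_S show "x \<in> sumset As + H" by fastforce
qed

lemma Sigma_len_subset_coset:
  assumes "Z = {g} + H" and "length As \<le> l"
  shows "Sigma_len l S \<subseteq> sumset As + H + {nmul (l - length As) g}"
proof
  fix x assume "x \<in> Sigma_len l S"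
  then obtain T where "T \<subseteq># S" "size T = l" "x = sum_mset T"
    unfolding Sigma_len_def by blast
  with assms(2) obtain T1 T2 where T: "x = sum_mset T1 + sum_mset T2" "size T2 = l - length As"
    "set_mset T2 \<subseteq> {g} + H" "sum_mset T1 \<in> sumset As + H"
    using split_subsequence_of_S assms(1) by fastforce
  then have "sum_mset T2 \<in> {nmul (l - length As) g} + H"
    using sum_mset_in_coset[OF subgroup] by metis
  then have "x \<in> (sumset As + H) + ({nmul (l - length As) g} + H)"
    using T(1,4) by (simp add: set_plus_intro)
  also have "\<dots> = sumset As + (H + H) + {nmul (l - length As) g}"
    by (simp only: add.assoc add.commute add.left_commute)
  finally show "x \<in> sumset As + H + {nmul (l - length As) g}"
    by (simp only: subgroup_plus_self[OF subgroup])
qed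

lemma coset_subset_Sigma_len:
  assumes "Z = {g} + H" and "length As \<le> l"
    and "l \<le> length As + size (S - seq_of_setpartition As)"
  obtains u where "nmul (l - length As) g \<in> {u} + H" and "sumset As + {u} \<subseteq> Sigma_len l S"
proof -
  obtain U where U: "U \<subseteq># S - seq_of_setpartition As" "size U = l - length As"
    using exists_subset_mset_size assms(3) by (metis add.commute le_diff_conv)
  then have "set_mset U \<subseteq> {g} + H"
    using rest_subset assms(1) by (auto dest: mset_subset_eqD)
  then have "nmul (l - length As) g \<in> {sum_mset U} + H"
    using sum_mset_in_coset[OF subgroup] subgroup_singleton_plus_sym[OF subgroup] U(2) by metis
  moreover have "sumset As + {sum_mset U} \<subseteq> Sigma_len l S"
  proof -
    have "{sum_mset U} \<subseteq> Sigma_len (l - length As) (S - seq_of_setpartition As)"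
      using U unfolding Sigma_len_def by blast
    then have "sumset As + {sum_mset U}
        \<subseteq> Sigma_len (length As) (seq_of_setpartition As)
          + Sigma_len (l - length As) (S - seq_of_setpartition As)"
      using sumset_subset_Sigma_len[OF setpartition] by (rule set_plus_mono2[rotated])
    also have "\<dots> \<subseteq> Sigma_len l S"
      using Sigma_len_plus assms(2) seq_subset by fastforce
    finally show ?thesis .
  qed
  ultimately show thesis by (rule that)
qed

lemma plus_Sigma_len_length_eq:
  assumes "H \<subseteq> stab (X + sumset As)"
  shows "X + Sigma_len (length As) S = X + sumset As"
proof
  have "X + Sigma_len (length As) S \<subseteq> X + (sumset As + H)"
    using Sigma_len_length_subset by (rule set_plus_mono2[OF order_refl])
  also have "\<dots> = X + sumset As"
    using plus_stab_eq[OF _ assms] subgroup by (simp add: add.assoc is_subgroup_def)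
  finally show "X + Sigma_len (length As) S \<subseteq> X + sumset As" .
  show "X + sumset As \<subseteq> X + Sigma_len (length As) S"
    using sumset_subset_Sigma_len_length by (rule set_plus_mono2[OF order_refl])
qed

lemma plus_Sigma_len_eq_coset:
  assumes "H \<subseteq> stab (X + sumset As)" and "Z = {g} + H"
    and "length As \<le> l" and "l \<le> length As + size (S - seq_of_setpartition As)"
  shows "X + Sigma_len l S = X + sumset As + {nmul (l - length As) g}"
    (is "_ = ?Y + {?c}")
proof
  have Y: "?Y + H = ?Y" using plus_stab_eq[OF _ assms(1)] subgroup by (simp add: is_subgroup_def)
  have "X + Sigma_len l S \<subseteq> X + (sumset As + H + {?c})"
    using Sigma_len_subset_coset[OF assms(2,3)] by (rule set_plus_mono2[OF order_refl])
  also have "\<dots> = ?Y + {?c}" by (metis Y add.assoc)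
  finally show "X + Sigma_len l S \<subseteq> ?Y + {?c}" .
  obtain u where u: "?c \<in> {u} + H" "sumset As + {u} \<subseteq> Sigma_len l S"
    using coset_subset_Sigma_len[OF assms(2-4)] .
  have "?Y + {?c} \<subseteq> ?Y + ({u} + H)"
    using u(1) by (intro set_plus_mono2) auto
  also have "\<dots> = X + (sumset As + {u})" by (metis Y add.assoc add.commute)
  also have "\<dots> \<subseteq> X + Sigma_len l S"
    using u(2) by (rule set_plus_mono2[OF order_refl])
  finally show "?Y + {?c} \<subseteq> X + Sigma_len l S" .
qed

end

theorem lemma2p4:
  fixes X Z H :: "'a::ab_group_add set"
    and S :: "'a multiset"
    and As :: "'a set list"
  assumes "finite X" and "X \<noteq> {}"
    and "is_setpartition As"
    and "seq_of_setpartition As \<subseteq># S"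
    and "set_mset (S - seq_of_setpartition As) \<subseteq> Z"
    and "\<forall>A\<in>set As. card (A - Z) \<le> 1"
    and "is_subgroup H"
    and "H \<subseteq> stab (setplus X (sumset As))"
    and "Z = setplus Z H"
    and "Z \<subseteq> (\<Inter>A\<in>set As. setplus A H)"
  shows "setplus X (Sigma_len (length As) S) = setplus X (sumset As)
    \<and> (\<forall>g. Z = (\<lambda>h. g + h) ` H \<longrightarrow>
          (\<forall>l. length As \<le> l \<and> l \<le> length As + size (S - seq_of_setpartition As) \<longrightarrow>
             setplus X (Sigma_len l S) = setplus (setplus X (sumset As)) {nmul (l - length As) g}))"
proof -
  interpret setpartition_of_sequence As S Z H
    using assms(3-7,10) by unfold_locales (auto simp: setplus_eq_plus)
  have stab: "H \<subseteq> stab (X + sumset As)" using assms(8) by (simp add: setplus_eq_plus)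
  show ?thesis
    unfolding setplus_eq_plus image_plus_eq_singleton_plus
    using plus_Sigma_len_length_eq[OF stab] plus_Sigma_len_eq_coset[OF stab] by blast
qed

end
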